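(* Let $p\ge2$ be an integer and let $G$ be a graph with $\mathrm{girth}(G)\ge 2p-1$. Then $G$ is $p$-path degenerate if and only if $G$ does not contain a subgraph $H$ that is a $\le(p-2)$-subdivision of a simple graph with minimum degree at least $3$.
   Context: Graphs are finite and simple; the girth is the length of a shortest cycle ($+\infty$ for forests). A $\le k$-subdivision of a graph $F$ is a graph obtained from $F$ by replacing each edge by a path of length at most $k+1$ (i.e. subdividing each edge at most $k$ times), these paths being internally disjoint. A strict ear of a graph $G$ is a path of $G$ whose internal vertices all have degree $2$ in $G$ and whose two endpoints are distinct. For an integer $p\ge1$, a $p$-reduction of $G$ is the deletion of either an isolated vertex, or a vertex of degree $1$, or the internal vertices of a strict ear of $G$ of length at least $p$. A graph is $p$-path degenerate if it can be reduced to the empty graph by a sequence of $p$-reductions. *)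

theory Defs
  imports Main "HOL-Library.Extended_Nat"
begin

definition graph :: "'a set \<Rightarrow> 'a set set \<Rightarrow> bool" where
  "graph V E \<longleftrightarrow> finite V \<and> (\<forall>e\<in>E. \<exists>u v. u \<noteq> v \<and> u \<in> V \<and> v \<in> V \<and> e = {u, v})"

definition degree :: "'a set set \<Rightarrow> 'a \<Rightarrow> nat" where
  "degree E v = card {e \<in> E. v \<in> e}"

definition subgraph :: "'a set \<Rightarrow> 'a set set \<Rightarrow> 'a set \<Rightarrow> 'a set set \<Rightarrow> bool" where
  "subgraph VH EH V E \<longleftrightarrow> graph VH EH \<and> VH \<subseteq> V \<and> EH \<subseteq> E"

text \<open>A path given by its (distinct) vertex sequence; its length is the number of edges.\<close>
definition is_path :: "'a set \<Rightarrow> 'a set set \<Rightarrow> 'a list \<Rightarrow> bool" where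
  "is_path V E xs \<longleftrightarrow> xs \<noteq> [] \<and> distinct xs \<and> set xs \<subseteq> V \<and>
     (\<forall>i. Suc i < length xs \<longrightarrow> {xs ! i, xs ! Suc i} \<in> E)"

definition path_edges :: "'a list \<Rightarrow> 'a set set" where
  "path_edges xs = {{xs ! i, xs ! Suc i} | i. Suc i < length xs}"

definition internal :: "'a list \<Rightarrow> 'a set" where
  "internal xs = set (butlast (tl xs))"

definition is_cycle :: "'a set \<Rightarrow> 'a set set \<Rightarrow> 'a list \<Rightarrow> bool" where
  "is_cycle V E xs \<longleftrightarrow> length xs \<ge> 3 \<and> is_path V E xs \<and> {last xs, hd xs} \<in> E"

text \<open>Girth: length of a shortest cycle, infinity for forests (Inf of the empty set of enat).\<close>
definition girth :: "'a set \<Rightarrow> 'a set set \<Rightarrow> enat" where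
  "girth V E = (INF xs \<in> {xs. is_cycle V E xs}. enat (length xs))"

text \<open>H = (VH,EH) is a \<le>k-subdivision of F = (VF,EF), where the branch vertices are VF \<subseteq> VH
  (this is up to isomorphism w.l.o.g.): each edge e of F is replaced by a path P e of length
  between 1 and k+1 joining the two ends of e, the paths being internally disjoint and
  avoiding VF internally, and H is exactly the union of these paths together with VF.\<close>
definition is_le_subdivision :: "nat \<Rightarrow> 'a set \<Rightarrow> 'a set set \<Rightarrow> 'a set \<Rightarrow> 'a set set \<Rightarrow> bool" where
  "is_le_subdivision k VF EF VH EH \<longleftrightarrow> graph VF EF \<and> graph VH EH \<and>
     (\<exists>P. (\<forall>e\<in>EF. is_path VH EH (P e) \<and> 2 \<le> length (P e) \<and> length (P e) \<le> k + 2 \<and>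
                     {hd (P e), last (P e)} = e \<and> internal (P e) \<inter> VF = {}) \<and>
          (\<forall>e\<in>EF. \<forall>e'\<in>EF. e \<noteq> e' \<longrightarrow> internal (P e) \<inter> internal (P e') = {}) \<and>
          VH = VF \<union> (\<Union>e\<in>EF. internal (P e)) \<and>
          EH = (\<Union>e\<in>EF. path_edges (P e)))"

definition strict_ear :: "'a set \<Rightarrow> 'a set set \<Rightarrow> 'a list \<Rightarrow> bool" where
  "strict_ear V E xs \<longleftrightarrow> is_path V E xs \<and> length xs \<ge> 2 \<and> hd xs \<noteq> last xs \<and>
     (\<forall>v\<in>internal xs. degree E v = 2)"

definition delete_vertices :: "'a set \<Rightarrow> 'a set \<times> 'a set set \<Rightarrow> 'a set \<times> 'a set set" where
  "delete_vertices S G = (fst G - S, {e \<in> snd G. e \<inter> S = {}})"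

definition p_reduction :: "nat \<Rightarrow> 'a set \<times> 'a set set \<Rightarrow> 'a set \<times> 'a set set \<Rightarrow> bool" where
  "p_reduction p G G' \<longleftrightarrow>
     (\<exists>v\<in>fst G. degree (snd G) v \<le> 1 \<and> G' = delete_vertices {v} G) \<or>
     (\<exists>xs. strict_ear (fst G) (snd G) xs \<and> length xs - 1 \<ge> p \<and> G' = delete_vertices (internal xs) G)"

definition p_path_degenerate :: "nat \<Rightarrow> 'a set \<Rightarrow> 'a set set \<Rightarrow> bool" where
  "p_path_degenerate p V E \<longleftrightarrow> (p_reduction p)\<^sup>*\<^sup>* (V, E) ({}, {})"

end

theory Submission
  imports Defs
begin

text \<open>
  Call a path a thread if its interior vertices have degree 2 and its ends degree at least 3.
  Paths through degree-2 vertices are rigid: two threads sharing an interior vertex coincide up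
  to reversal, and a path that enters the interior of a degree-2 path s and has its ends outside
  it must run along all of s, so it is at least as long as s.

  Necessity: in a <=(p-2)-subdivision H of a graph of minimum degree 3, branch vertices have
  degree at least 3 and subdivision vertices degree at least 2 in G, and the interior of a strict
  ear of length at least p cannot meet H, since the ear would have to run inside a branch path of
  length at most p - 1. Hence p-reductions never touch H, and a p-path degenerate graph contains
  no such H.

  Sufficiency: a nonempty graph admitting no p-reduction has minimum degree 2 and only strict ears
  of length less than p, so all its threads are that short. Two threads with the same ends would
  close a cycle of length at most 2p - 2, which the girth forbids; so the threads subdivide a
  simple graph on the vertices of degree at least 3, and this graph has minimum degree 3 because
  every edge at such a vertex starts a thread.
\<close>

definition neighbours :: "'a set set \<Rightarrow> 'a \<Rightarrow> 'a set" where
  "neighbours E v = {w. {v, w} \<in> E}"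

lemma in_neighbours_iff [simp]: "w \<in> neighbours E v \<longleftrightarrow> {v, w} \<in> E"
  by (simp add: neighbours_def)

lemma graph_edgeD: "graph V E \<Longrightarrow> {a, b} \<in> E \<Longrightarrow> a \<noteq> b \<and> a \<in> V \<and> b \<in> V"
  unfolding graph_def by (metis doubleton_eq_iff)

lemma graph_edge_subset: "graph V E \<Longrightarrow> e \<in> E \<Longrightarrow> e \<subseteq> V"
  unfolding graph_def by auto

lemma graph_finite_edges: "graph V E \<Longrightarrow> finite E"
proof -
  assume g: "graph V E"
  hence "E \<subseteq> Pow V" using graph_edge_subset by blast
  moreover have "finite V" using g unfolding graph_def by simp
  ultimately show ?thesis by (simp add: finite_subset)
qed

lemma graph_empty_vertices: "graph {} E \<Longrightarrow> E = {}"
  unfolding graph_def by blast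

lemma finite_neighbours: "graph V E \<Longrightarrow> finite (neighbours E v)"
proof -
  assume g: "graph V E"
  hence "neighbours E v \<subseteq> V" using graph_edgeD by fastforce
  thus ?thesis using g unfolding graph_def by (simp add: finite_subset)
qed

lemma degree_eq_card_neighbours:
  assumes "graph V E" shows "degree E v = card (neighbours E v)"
proof -
  have "{e \<in> E. v \<in> e} \<subseteq> (\<lambda>w. {v, w}) ` neighbours E v"
  proof
    fix e assume e: "e \<in> {e \<in> E. v \<in> e}"
    then obtain a b where "e = {a, b}" using assms unfolding graph_def by blast
    hence "e = {v, if a = v then b else a}" using e by auto
    thus "e \<in> (\<lambda>w. {v, w}) ` neighbours E v"
      using e by (intro image_eqI[where x = "if a = v then b else a"]) auto
  qed
  hence "{e \<in> E. v \<in> e} = (\<lambda>w. {v, w}) ` neighbours E v" by auto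
  moreover have "inj_on (\<lambda>w. {v, w}) (neighbours E v)"
    by (auto simp: inj_on_def doubleton_eq_iff)
  ultimately show ?thesis unfolding degree_def by (simp add: card_image)
qed

lemma degree_2_neighbour_unique:
  assumes "graph V E" "degree E w = 2"
    and "a \<in> neighbours E w" "b \<in> neighbours E w" "c \<in> neighbours E w" "a \<noteq> b" "a \<noteq> c"
  shows "b = c"
proof (rule ccontr)
  assume "b \<noteq> c"
  hence "card {a, b, c} = 3" using assms by auto
  moreover have "card {a, b, c} \<le> card (neighbours E w)"
    using assms finite_neighbours by (intro card_mono) auto
  ultimately show False using assms degree_eq_card_neighbours by fastforce
qed

lemma is_path_iff_successively:
  "is_path V E xs \<longleftrightarrow> xs \<noteq> [] \<and> distinct xs \<and> set xs \<subseteq> V \<and> successively (\<lambda>x y. {x, y} \<in> E) xs"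
  by (simp add: is_path_def successively_conv_nth)

lemma is_path_rev: "is_path V E xs \<Longrightarrow> is_path V E (rev xs)"
  unfolding is_path_iff_successively by (simp add: successively_rev insert_commute)

lemma is_path_mono: "is_path V E xs \<Longrightarrow> V \<subseteq> V' \<Longrightarrow> E \<subseteq> E' \<Longrightarrow> is_path V' E' xs"
  unfolding is_path_def by blast

lemma is_path_neighbours:
  "is_path V E xs \<Longrightarrow> Suc i < length xs \<Longrightarrow>
     xs ! i \<in> neighbours E (xs ! Suc i) \<and> xs ! Suc i \<in> neighbours E (xs ! i)"
  unfolding is_path_def by (simp add: insert_commute)

lemma is_path_hd_neq_last: "is_path V E xs \<Longrightarrow> 2 \<le> length xs \<Longrightarrow> hd xs \<noteq> last xs"
  unfolding is_path_def by (auto simp: hd_conv_nth last_conv_nth nth_eq_iff_index_eq)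

lemma is_path_length_le_card: "is_path V E xs \<Longrightarrow> finite V \<Longrightarrow> length xs \<le> card V"
  unfolding is_path_def by (metis card_mono distinct_card)

lemma path_edges_subset: "is_path V E xs \<Longrightarrow> path_edges xs \<subseteq> E"
  unfolding path_edges_def is_path_def by auto

lemma list_eq_hd_internal_last: "2 \<le> length xs \<Longrightarrow> xs = hd xs # butlast (tl xs) @ [last xs]"
  by (cases xs; cases "tl xs") auto

lemma internal_conv_nth: "x \<in> internal xs \<longleftrightarrow> (\<exists>m. 0 < m \<and> m < length xs - 1 \<and> x = xs ! m)"
proof -
  have nth: "i < length xs - 2 \<Longrightarrow> butlast (tl xs) ! i = xs ! Suc i" for i
    by (simp add: nth_butlast nth_tl)
  show ?thesis
  proof
    assume "x \<in> internal xs"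
    then obtain i where "i < length xs - 2" "x = xs ! Suc i"
      unfolding internal_def in_set_conv_nth using nth by (auto simp: numeral_2_eq_2)
    thus "\<exists>m. 0 < m \<and> m < length xs - 1 \<and> x = xs ! m" by (intro exI[of _ "Suc i"]) auto
  next
    assume "\<exists>m. 0 < m \<and> m < length xs - 1 \<and> x = xs ! m"
    then obtain m where "0 < m" "m < length xs - 1" "x = xs ! m" by blast
    thus "x \<in> internal xs"
      unfolding internal_def in_set_conv_nth using nth[of "m - 1"] by (intro exI[of _ "m - 1"]) auto
  qed
qed

lemma nth_mem_internal: "0 < m \<Longrightarrow> m < length xs - 1 \<Longrightarrow> xs ! m \<in> internal xs"
  by (auto simp: internal_conv_nth)

lemma internal_subset_set: "internal xs \<subseteq> set xs"
  unfolding internal_def by (metis in_set_butlastD list.set_sel(2) subsetI tl_Nil)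

lemma internal_rev [simp]: "internal (rev xs) = internal xs"
proof (cases "2 \<le> length xs")
  case True
  then obtain a zs b where "xs = a # zs @ [b]" by (metis list_eq_hd_internal_last)
  thus ?thesis unfolding internal_def by simp
next
  case False
  hence "length xs = 0 \<or> length xs = 1" by linarith
  thus ?thesis unfolding internal_def by (auto simp: length_Suc_conv)
qed

lemma set_eq_ends_Un_internal: "2 \<le> length xs \<Longrightarrow> set xs = {hd xs, last xs} \<union> internal xs"
  unfolding internal_def by (subst (1) list_eq_hd_internal_last) auto

lemma internal_snoc: "2 \<le> length xs \<Longrightarrow> internal (xs @ [w]) = insert (last xs) (internal xs)"
  unfolding internal_def by (subst (1 2) list_eq_hd_internal_last) (auto simp: butlast_append)

lemma internal_degree_ge_2:
  assumes g: "graph V E" and xs: "is_path V E xs" and w: "w \<in> internal xs"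
  shows "2 \<le> degree E w"
proof -
  obtain m where m: "0 < m" "m < length xs - 1" "w = xs ! m" using w internal_conv_nth by metis
  have "{xs ! (m - 1), xs ! Suc m} \<subseteq> neighbours E w"
    using is_path_neighbours[OF xs, of "m - 1"] is_path_neighbours[OF xs, of m] m by auto
  moreover have "xs ! (m - 1) \<noteq> xs ! Suc m"
    using xs m unfolding is_path_def by (simp add: nth_eq_iff_index_eq)
  ultimately have "2 \<le> card (neighbours E w)"
    by (metis card_2_iff card_mono finite_neighbours[OF g])
  thus ?thesis using degree_eq_card_neighbours[OF g] by simp
qed

lemma is_cycle_mono: "is_cycle V E xs \<Longrightarrow> V \<subseteq> V' \<Longrightarrow> E \<subseteq> E' \<Longrightarrow> is_cycle V' E' xs"
  unfolding is_cycle_def using is_path_mono by blast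

lemma girth_le_cycle_length: "enat n \<le> girth V E \<Longrightarrow> is_cycle V E xs \<Longrightarrow> n \<le> length xs"
  unfolding girth_def by (metis (mono_tags) INF_lower enat_ord_simps(1) mem_Collect_eq order_trans)

lemma is_path_tl: "is_path V E xs \<Longrightarrow> tl xs \<noteq> [] \<Longrightarrow> is_path V E (tl xs)"
  unfolding is_path_iff_successively by (cases xs) (auto simp: successively_Cons)

lemma is_path_append_tl:
  assumes "is_path V E xs" "is_path V E ys" "last xs = hd ys" "set xs \<inter> set (tl ys) = {}"
  shows "is_path V E (xs @ tl ys)"
proof (cases "tl ys = []")
  case False
  then obtain y z zs where "ys = y # z # zs" by (cases ys; cases "tl ys") auto
  thus ?thesis using assms unfolding is_path_iff_successively
    by (auto simp: successively_append_iff successively_Cons)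
qed (use assms in simp)

lemma tl_rev_tl: "tl (rev (tl xs)) = rev (butlast (tl xs))"
  by (metis butlast_rev rev_rev_ident)

lemma subgraph_is_path: "subgraph VH EH V E \<Longrightarrow> is_path VH EH xs \<Longrightarrow> is_path V E xs"
  unfolding subgraph_def by (simp add: is_path_mono)

lemma path_neighbour_of_end:
  assumes P: "is_path V E P" "2 \<le> length P" and v: "v \<in> {hd P, last P}"
  shows "\<exists>y. {v, y} \<in> E \<and> (y \<in> internal P \<or> {hd P, last P} = {v, y})"
proof -
  have from_hd: "\<exists>y. {hd Q, y} \<in> E \<and> (y \<in> internal Q \<or> {hd Q, last Q} = {hd Q, y})"
    if Q: "is_path V E Q" "2 \<le> length Q" for Q
  proof (cases "length Q = 2")
    case True
    moreover have "Q \<noteq> []" using True by auto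
    ultimately have "last Q = Q ! 1" by (simp add: last_conv_nth)
    thus ?thesis using Q True by (intro exI[of _ "Q ! 1"]) (auto simp: is_path_def hd_conv_nth)
  next
    case False
    thus ?thesis using Q nth_mem_internal[of 1 Q]
      by (intro exI[of _ "Q ! 1"]) (auto simp: is_path_def hd_conv_nth)
  qed
  show ?thesis
  proof (cases "v = hd P")
    case True
    thus ?thesis using from_hd[OF P] by simp
  next
    case False
    hence "v = hd (rev P)" "{hd (rev P), last (rev P)} = {hd P, last P}"
      using v P by (auto simp: hd_rev last_rev)
    thus ?thesis using from_hd[of "rev P"] P is_path_rev[OF P(1)] by auto
  qed
qed

section \<open>Rigidity of paths through degree-2 vertices\<close>

lemma deg2_paths_agree_forward:
  assumes g: "graph V E" and s: "is_path V E s" and s': "is_path V E s'"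
    and deg2: "\<forall>w\<in>internal s. degree E w = 2"
    and e0: "s ! i = s' ! j" and e1: "s ! Suc i = s' ! Suc j"
    and k: "i + k < length s" "j + k < length s'"
  shows "s ! (i + k) = s' ! (j + k)"
proof -
  have ds: "distinct s" and ds': "distinct s'" using s s' unfolding is_path_def by auto
  have "(i + k < length s \<and> j + k < length s' \<longrightarrow> s ! (i + k) = s' ! (j + k)) \<and>
        (i + Suc k < length s \<and> j + Suc k < length s' \<longrightarrow> s ! (i + Suc k) = s' ! (j + Suc k))"
  proof (induction k)
    case 0
    show ?case using e0 e1 by simp
  next
    case (Suc k)
    have "s ! (i + Suc (Suc k)) = s' ! (j + Suc (Suc k))"
      if len: "i + Suc (Suc k) < length s" "j + Suc (Suc k) < length s'"
    proof -
      have prev: "s ! (i + k) = s' ! (j + k)" and cur: "s ! (i + Suc k) = s' ! (j + Suc k)"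
        using Suc len by auto
      let ?w = "s ! (i + Suc k)"
      have "degree E ?w = 2" using deg2 len nth_mem_internal[of "i + Suc k" s] by simp
      moreover have "s ! (i + k) \<in> neighbours E ?w" "s ! (i + Suc (Suc k)) \<in> neighbours E ?w"
        using is_path_neighbours[OF s, of "i + k"] is_path_neighbours[OF s, of "i + Suc k"] len
        by auto
      moreover have "s' ! (j + Suc (Suc k)) \<in> neighbours E ?w"
        using is_path_neighbours[OF s', of "j + Suc k"] len cur by auto
      moreover have "s ! (i + k) \<noteq> s ! (i + Suc (Suc k))"
        using ds len by (simp add: nth_eq_iff_index_eq)
      moreover have "s ! (i + k) \<noteq> s' ! (j + Suc (Suc k))"
        using ds' len prev by (simp add: nth_eq_iff_index_eq)
      ultimately show ?thesis using degree_2_neighbour_unique[OF g] by blast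
    qed
    thus ?case using Suc by blast
  qed
  thus ?thesis using k by blast
qed

lemma deg2_path_suffix_le:
  assumes g: "graph V E" and s: "is_path V E s" and s': "is_path V E s'"
    and deg2: "\<forall>w\<in>internal s. degree E w = 2"
    and e0: "s ! i = s' ! j" and e1: "s ! Suc i = s' ! Suc j" and j: "Suc j < length s'"
    and last: "last s' \<notin> internal s"
  shows "length s - i \<le> length s' - j"
proof (rule ccontr)
  assume "\<not> length s - i \<le> length s' - j"
  define k where "k = length s' - 1 - j"
  have k: "0 < i + k" "i + k < length s - 1" "j + k = length s' - 1"
    using j \<open>\<not> length s - i \<le> length s' - j\<close> unfolding k_def by auto
  have "s' \<noteq> []" using j by auto
  hence "last s' = s' ! (j + k)" using k by (simp add: last_conv_nth)
  hence "s ! (i + k) = last s'"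
    using deg2_paths_agree_forward[OF g s s' deg2 e0 e1, of k] k j by simp
  thus False using last nth_mem_internal[OF k(1,2)] by simp
qed

lemma deg2_paths_agree_step_back:
  assumes g: "graph V E" and s: "is_path V E s" and s': "is_path V E s'"
    and deg2: "\<forall>w\<in>internal s. degree E w = 2"
    and i: "0 < i" "i < length s - 1" and j: "0 < j" "j < length s' - 1"
    and e0: "s ! i = s' ! j" and e1: "s ! Suc i = s' ! Suc j"
  shows "s ! (i - 1) = s' ! (j - 1)"
proof -
  have "degree E (s ! i) = 2" using deg2 nth_mem_internal[OF i] by simp
  moreover have "s ! Suc i \<in> neighbours E (s ! i)" "s ! (i - 1) \<in> neighbours E (s ! i)"
    using is_path_neighbours[OF s, of i] is_path_neighbours[OF s, of "i - 1"] i by auto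
  moreover have "s' ! (j - 1) \<in> neighbours E (s ! i)"
    using is_path_neighbours[OF s', of "j - 1"] j e0 by auto
  moreover have "s ! Suc i \<noteq> s ! (i - 1)" "s ! Suc i \<noteq> s' ! (j - 1)"
    using s s' i j e1 unfolding is_path_def by (auto simp: nth_eq_iff_index_eq)
  ultimately show ?thesis using degree_2_neighbour_unique[OF g] by blast
qed

text \<open>Once s' runs along an edge of s, in the same direction and at interior positions of both,
  it can only leave s at an end of s.\<close>
lemma deg2_path_factor:
  assumes g: "graph V E" and s: "is_path V E s" and s': "is_path V E s'"
    and deg2: "\<forall>w\<in>internal s. degree E w = 2"
    and ends: "hd s' \<notin> internal s" "last s' \<notin> internal s"
    and i: "0 < i" "i < length s - 1" and j: "0 < j" "j < length s' - 1"
    and e0: "s ! i = s' ! j" and e1: "s ! Suc i = s' ! Suc j"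
  shows "i \<le> j \<and> length s + (j - i) \<le> length s' \<and> (\<forall>m < length s. s ! m = s' ! (m + (j - i)))"
proof -
  define i' where "i' = length s - 1 - i"
  define j' where "j' = length s' - 1 - j"
  have rs: "is_path V E (rev s)" and rs': "is_path V E (rev s')"
    using s s' by (auto intro: is_path_rev)
  have rdeg2: "\<forall>w\<in>internal (rev s). degree E w = 2" using deg2 by simp
  have r0: "rev s ! i' = rev s' ! j'" using i j e0 unfolding i'_def j'_def by (simp add: rev_nth)
  have r1: "rev s ! Suc i' = rev s' ! Suc j'"
    using i j deg2_paths_agree_step_back[OF g s s' deg2 i j e0 e1] unfolding i'_def j'_def
    by (simp add: rev_nth Suc_diff_Suc)
  have "s' \<noteq> []" using s' unfolding is_path_def by simp
  hence "last (rev s') \<notin> internal (rev s)" using ends by (simp add: last_rev)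
  from deg2_path_suffix_le[OF g rs rs' rdeg2 r0 r1 _ this]
  have ij: "i \<le> j" using i j unfolding i'_def j'_def by simp
  have len: "length s - i \<le> length s' - j"
    using deg2_path_suffix_le[OF g s s' deg2 e0 e1 _ ends(2)] j by simp
  have "s ! m = s' ! (m + (j - i))" if m: "m < length s" for m
  proof (cases "i \<le> m")
    case True
    thus ?thesis using deg2_paths_agree_forward[OF g s s' deg2 e0 e1, of "m - i"] m len ij j
      by (simp add: add.commute)
  next
    case False
    have len': "i' + (i - m) < length s" "j' + (i - m) < length s'"
      using False ij i j unfolding i'_def j'_def by auto
    have "rev s ! (i' + (i - m)) = rev s' ! (j' + (i - m))"
      using deg2_paths_agree_forward[OF g rs rs' rdeg2 r0 r1] len' by simp
    moreover have "rev s ! (i' + (i - m)) = s ! m"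
      using len' False i unfolding i'_def by (simp add: rev_nth)
    moreover have "rev s' ! (j' + (i - m)) = s' ! (m + (j - i))"
      using len' False ij j unfolding j'_def by (simp add: rev_nth add.commute)
    ultimately show ?thesis by simp
  qed
  thus ?thesis using ij len i j by auto
qed

lemma shared_internal_vertex_aligned:
  assumes g: "graph V E" and s: "is_path V E s" and s': "is_path V E s'"
    and w: "w \<in> internal s" "w \<in> internal s'" "degree E w = 2"
  obtains t i j where "t = s' \<or> t = rev s'" "0 < i" "i < length s - 1" "0 < j" "j < length t - 1"
    "s ! i = t ! j" "s ! Suc i = t ! Suc j"
proof -
  obtain i where i: "0 < i" "i < length s - 1" "w = s ! i" using w internal_conv_nth by metis
  obtain j where j: "0 < j" "j < length s' - 1" "w = s' ! j" using w internal_conv_nth by metis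
  have "s ! Suc i \<in> neighbours E w" using is_path_neighbours[OF s, of i] i by simp
  moreover have "s' ! Suc j \<in> neighbours E w" "s' ! (j - 1) \<in> neighbours E w"
    using is_path_neighbours[OF s', of j] is_path_neighbours[OF s', of "j - 1"] j by auto
  moreover have "s' ! Suc j \<noteq> s' ! (j - 1)"
    using s' j unfolding is_path_def by (simp add: nth_eq_iff_index_eq)
  ultimately have "s ! Suc i = s' ! Suc j \<or> s ! Suc i = s' ! (j - 1)"
    using degree_2_neighbour_unique[OF g w(3)] by metis
  thus thesis
  proof
    assume "s ! Suc i = s' ! Suc j"
    thus thesis using that[of "s'" i j] i j by simp
  next
    assume backward: "s ! Suc i = s' ! (j - 1)"
    let ?j = "length s' - 1 - j"
    show thesis
    proof (rule that[of "rev s'" i ?j])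
      show "s ! i = rev s' ! ?j" "s ! Suc i = rev s' ! Suc ?j"
        using i j backward by (simp_all add: rev_nth Suc_diff_Suc)
    qed (use i j in auto)
  qed
qed

lemma deg2_path_length_le_crossing_path:
  assumes g: "graph V E" and s: "is_path V E s" and s': "is_path V E s'"
    and deg2: "\<forall>w\<in>internal s. degree E w = 2"
    and ends: "hd s' \<notin> internal s" "last s' \<notin> internal s"
    and w: "w \<in> internal s" "w \<in> internal s'"
  shows "length s \<le> length s'"
proof -
  obtain t i j where t: "t = s' \<or> t = rev s'" and ij: "0 < i" "i < length s - 1" "0 < j"
      "j < length t - 1" "s ! i = t ! j" "s ! Suc i = t ! Suc j"
    using shared_internal_vertex_aligned[OF g s s' w] deg2 w(1) by metis
  have "s' \<noteq> []" using s' unfolding is_path_def by simp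
  hence "is_path V E t" "hd t \<notin> internal s" "last t \<notin> internal s" "length t = length s'"
    using t s' ends by (auto simp: is_path_rev hd_rev last_rev)
  thus ?thesis using deg2_path_factor[OF g s _ deg2 _ _ ij] by fastforce
qed

lemma deg2_path_closing_neighbour:
  assumes g: "graph V E" and xs: "is_path V E xs" and deg2: "\<forall>w\<in>internal xs. degree E w = 2"
    and len: "2 \<le> length xs" and edge: "{last xs, w} \<in> E" and w: "w \<in> set xs"
    and not_prev: "w \<noteq> xs ! (length xs - 2)"
  shows "w = hd xs"
proof -
  define k where "k = length xs"
  obtain m where m: "m < k" "w = xs ! m" using w unfolding k_def by (metis in_set_conv_nth)
  have ds: "distinct xs" using xs unfolding is_path_def by simp
  have "xs \<noteq> []" using len by auto
  hence last: "last xs = xs ! (k - 1)" unfolding k_def by (simp add: last_conv_nth)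
  have "m \<noteq> k - 1" using graph_edgeD[OF g edge] m last by auto
  moreover have "m \<noteq> k - 2" using not_prev m unfolding k_def by auto
  moreover have "\<not> (0 < m \<and> m < k - 2)"
  proof
    assume mk: "0 < m \<and> m < k - 2"
    have "degree E w = 2" using deg2 nth_mem_internal[of m xs] mk m unfolding k_def by auto
    moreover have "xs ! (m - 1) \<in> neighbours E w" "xs ! Suc m \<in> neighbours E w"
      using is_path_neighbours[OF xs, of "m - 1"] is_path_neighbours[OF xs, of m] mk m
      unfolding k_def by auto
    moreover have "last xs \<in> neighbours E w" using edge by (simp add: insert_commute)
    moreover have "xs ! (m - 1) \<noteq> xs ! Suc m" "xs ! (m - 1) \<noteq> last xs" "xs ! Suc m \<noteq> last xs"
      using ds mk last unfolding k_def by (auto simp: nth_eq_iff_index_eq)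
    ultimately show False using degree_2_neighbour_unique[OF g] by metis
  qed
  ultimately have "m = 0" using m(1) by linarith
  thus ?thesis using m \<open>xs \<noteq> []\<close> by (simp add: hd_conv_nth)
qed

definition thread :: "'a set \<Rightarrow> 'a set set \<Rightarrow> 'a list \<Rightarrow> bool" where
  "thread V E s \<longleftrightarrow> is_path V E s \<and> 2 \<le> length s \<and> 3 \<le> degree E (hd s) \<and> 3 \<le> degree E (last s)
     \<and> (\<forall>w\<in>internal s. degree E w = 2)"

lemma thread_rev: "thread V E s \<Longrightarrow> thread V E (rev s)"
  unfolding thread_def by (auto simp: is_path_rev hd_rev last_rev)

lemma thread_end_notin_internal:
  "thread V E s \<Longrightarrow> thread V E s' \<Longrightarrow> hd s' \<notin> internal s \<and> last s' \<notin> internal s"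
  unfolding thread_def by force

lemma threads_sharing_internal_vertex:
  assumes g: "graph V E" and s: "thread V E s" and s': "thread V E s'"
    and w: "w \<in> internal s" "w \<in> internal s'"
  shows "s = s' \<or> s = rev s'"
proof -
  have ps: "is_path V E s" and ps': "is_path V E s'" and deg2: "\<forall>w\<in>internal s. degree E w = 2"
    using s s' unfolding thread_def by auto
  obtain t i j where t: "t = s' \<or> t = rev s'" and ij: "0 < i" "i < length s - 1" "0 < j"
      "j < length t - 1" "s ! i = t ! j" "s ! Suc i = t ! Suc j"
    using shared_internal_vertex_aligned[OF g ps ps' w] deg2 w(1) by metis
  have tt: "thread V E t" using t s' thread_rev by blast
  have pt: "is_path V E t" and tdeg2: "\<forall>w\<in>internal t. degree E w = 2"
    using tt unfolding thread_def by auto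
  have st: "i \<le> j \<and> length s + (j - i) \<le> length t \<and> (\<forall>m < length s. s ! m = t ! (m + (j - i)))"
    using deg2_path_factor[OF g ps pt deg2 _ _ ij] thread_end_notin_internal[OF s tt] by blast
  have "j \<le> i \<and> length t + (i - j) \<le> length s"
    using deg2_path_factor[OF g pt ps tdeg2 _ _ ij(3,4,1,2) ij(5,6)[symmetric]]
      thread_end_notin_internal[OF tt s] by blast
  hence "s = t" using st by (intro nth_equalityI) auto
  thus ?thesis using t by blast
qed

section \<open>Short subdivisions\<close>

definition contains_le_subdivision_mindeg3 :: "nat \<Rightarrow> 'a set \<Rightarrow> 'a set set \<Rightarrow> bool" where
  "contains_le_subdivision_mindeg3 k V E \<longleftrightarrow>
     (\<exists>VH EH VF EF. subgraph VH EH V E \<and> graph VF EF \<and> VF \<noteq> {} \<and>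
        (\<forall>v\<in>VF. degree EF v \<ge> 3) \<and> is_le_subdivision k VF EF VH EH)"

locale subdivision_paths =
  fixes k :: nat and VF :: "'a set" and EF :: "'a set set" and VH :: "'a set" and EH :: "'a set set"
    and P :: "'a set \<Rightarrow> 'a list"
  assumes graph_branch: "graph VF EF" and graph_subdivision: "graph VH EH"
    and path: "e \<in> EF \<Longrightarrow> is_path VH EH (P e)"
    and length_ge: "e \<in> EF \<Longrightarrow> 2 \<le> length (P e)" and length_le: "e \<in> EF \<Longrightarrow> length (P e) \<le> k + 2"
    and ends: "e \<in> EF \<Longrightarrow> {hd (P e), last (P e)} = e"
    and internal_branch_disjoint: "e \<in> EF \<Longrightarrow> internal (P e) \<inter> VF = {}"
    and internal_disjoint: "e \<in> EF \<Longrightarrow> e' \<in> EF \<Longrightarrow> e \<noteq> e' \<Longrightarrow> internal (P e) \<inter> internal (P e') = {}"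
    and vertices: "VH = VF \<union> (\<Union>e\<in>EF. internal (P e))"
    and edges: "EH = (\<Union>e\<in>EF. path_edges (P e))"

lemma is_le_subdivision_iff:
  "is_le_subdivision k VF EF VH EH \<longleftrightarrow> (\<exists>P. subdivision_paths k VF EF VH EH P)"
proof
  assume "is_le_subdivision k VF EF VH EH"
  then obtain P where "graph VF EF" "graph VH EH"
    and H: "(\<forall>e\<in>EF. is_path VH EH (P e) \<and> 2 \<le> length (P e) \<and> length (P e) \<le> k + 2 \<and>
                     {hd (P e), last (P e)} = e \<and> internal (P e) \<inter> VF = {}) \<and>
          (\<forall>e\<in>EF. \<forall>e'\<in>EF. e \<noteq> e' \<longrightarrow> internal (P e) \<inter> internal (P e') = {}) \<and>
          VH = VF \<union> (\<Union>e\<in>EF. internal (P e)) \<and> EH = (\<Union>e\<in>EF. path_edges (P e))"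
    unfolding is_le_subdivision_def by blast
  hence "subdivision_paths k VF EF VH EH P" by unfold_locales auto
  thus "\<exists>P. subdivision_paths k VF EF VH EH P" by blast
next
  assume "\<exists>P. subdivision_paths k VF EF VH EH P"
  then obtain P where "subdivision_paths k VF EF VH EH P" ..
  then interpret subdivision_paths k VF EF VH EH P .
  have "\<forall>e\<in>EF. is_path VH EH (P e) \<and> 2 \<le> length (P e) \<and> length (P e) \<le> k + 2 \<and>
      {hd (P e), last (P e)} = e \<and> internal (P e) \<inter> VF = {}"
    using path length_ge length_le ends internal_branch_disjoint by blast
  moreover have "\<forall>e\<in>EF. \<forall>e'\<in>EF. e \<noteq> e' \<longrightarrow> internal (P e) \<inter> internal (P e') = {}"
    using internal_disjoint by blast
  ultimately show "is_le_subdivision k VF EF VH EH"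
    unfolding is_le_subdivision_def using graph_branch graph_subdivision vertices edges
    by (intro conjI exI[of _ P]) assumption+
qed

context subdivision_paths
begin

text \<open>A branch path leaving v through y is the edge {v, y} itself, or y is one of its interior
  vertices, which lie on no other branch path and are not branch vertices.\<close>
lemma branch_path_determined_by_first_step:
  assumes e: "e \<in> EF" "e' \<in> EF"
    and y: "y \<in> internal (P e) \<or> e = {v, y}" "y \<in> internal (P e') \<or> e' = {v, y}"
  shows "e = e'"
proof -
  have not_internal: "y \<notin> internal (P d')" if "d \<in> EF" "d' \<in> EF" "d = {v, y}" for d d'
  proof -
    have "y \<in> VF" using graph_edge_subset[OF graph_branch that(1)] that(3) by blast
    thus ?thesis using internal_branch_disjoint[OF that(2)] by blast
  qed
  show ?thesis
  proof (cases "e = {v, y}")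
    case True
    hence "e' = {v, y}" using not_internal[OF e True] y(2) by blast
    thus ?thesis using True by simp
  next
    case False
    hence "y \<in> internal (P e)" using y(1) by blast
    moreover have "y \<in> internal (P e')" using not_internal[OF e(2,1)] y(2) calculation by blast
    ultimately show ?thesis using internal_disjoint[OF e] by blast
  qed
qed

lemma branch_degree_le:
  assumes g: "graph V E" and sub: "subgraph VH EH V E" and v: "v \<in> VF"
  shows "degree EF v \<le> degree E v"
proof -
  define A where "A = {e \<in> EF. v \<in> e}"
  define f where "f e = (SOME y. {v, y} \<in> E \<and> (y \<in> internal (P e) \<or> e = {v, y}))" for e
  have f: "{v, f e} \<in> E \<and> (f e \<in> internal (P e) \<or> e = {v, f e})" if e: "e \<in> A" for e
  proof -
    have eF: "e \<in> EF" "v \<in> {hd (P e), last (P e)}" using e ends unfolding A_def by auto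
    have "\<exists>y. {v, y} \<in> E \<and> (y \<in> internal (P e) \<or> {hd (P e), last (P e)} = {v, y})"
      using path_neighbour_of_end[OF subgraph_is_path[OF sub path[OF eF(1)]] length_ge[OF eF(1)]
          eF(2)] .
    hence "\<exists>y. {v, y} \<in> E \<and> (y \<in> internal (P e) \<or> e = {v, y})" using ends[OF eF(1)] by simp
    thus ?thesis unfolding f_def by (rule someI_ex)
  qed
  have "inj_on f A"
  proof
    fix e e' assume e: "e \<in> A" and e': "e' \<in> A" and eq: "f e = f e'"
    have "f e \<in> internal (P e') \<or> e' = {v, f e}" using f[OF e'] eq by simp
    thus "e = e'" using branch_path_determined_by_first_step[of e e' "f e" v] f[OF e] e e'
      unfolding A_def by blast
  qed
  moreover have "f ` A \<subseteq> neighbours E v" using f by auto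
  ultimately have "card A \<le> card (neighbours E v)"
    by (rule card_inj_on_le[OF _ _ finite_neighbours[OF g]])
  thus ?thesis unfolding degree_eq_card_neighbours[OF g] unfolding degree_def A_def .
qed

lemma branch_degree_ge_3:
  "graph V E \<Longrightarrow> subgraph VH EH V E \<Longrightarrow> \<forall>v\<in>VF. degree EF v \<ge> 3 \<Longrightarrow> v \<in> VF \<Longrightarrow> 3 \<le> degree E v"
  using branch_degree_le by fastforce

lemma vertex_degree_ge_2:
  assumes g: "graph V E" and sub: "subgraph VH EH V E" and mindeg: "\<forall>v\<in>VF. degree EF v \<ge> 3"
    and u: "u \<in> VH"
  shows "2 \<le> degree E u"
proof (cases "u \<in> VF")
  case True
  thus ?thesis using branch_degree_ge_3[OF g sub mindeg] by fastforce
next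
  case False
  then obtain e where "e \<in> EF" "u \<in> internal (P e)" using u vertices by blast
  thus ?thesis using internal_degree_ge_2[OF g subgraph_is_path[OF sub path]] by blast
qed

text \<open>An internal vertex of the ear has degree 2, so it is a subdivision vertex of some branch path
  P e; the ear then runs inside P e, which is too short to contain it.\<close>
lemma long_ear_avoids_subdivision:
  assumes g: "graph V E" and sub: "subgraph VH EH V E" and mindeg: "\<forall>v\<in>VF. degree EF v \<ge> 3"
    and ear: "strict_ear V E xs" and long: "k + 2 < length xs"
  shows "VH \<inter> internal xs = {}"
proof (rule ccontr)
  assume "VH \<inter> internal xs \<noteq> {}"
  then obtain w where w: "w \<in> VH" "w \<in> internal xs" by blast
  have xs: "is_path V E xs" and deg2: "\<forall>u\<in>internal xs. degree E u = 2"
    using ear unfolding strict_ear_def by auto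
  have branch: "v \<in> VF \<Longrightarrow> 3 \<le> degree E v" for v by (rule branch_degree_ge_3[OF g sub mindeg])
  hence "w \<notin> VF" using deg2 w by fastforce
  then obtain e where e: "e \<in> EF" "w \<in> internal (P e)" using w(1) vertices by blast
  have "{hd (P e), last (P e)} \<subseteq> VF"
    using ends[OF e(1)] graph_edge_subset[OF graph_branch e(1)] by simp
  hence "hd (P e) \<notin> internal xs" "last (P e) \<notin> internal xs" using branch deg2 by fastforce+
  hence "length xs \<le> length (P e)"
    using deg2_path_length_le_crossing_path[OF g xs subgraph_is_path[OF sub path[OF e(1)]] deg2 _ _
        w(2) e(2)]
    by blast
  thus False using length_le[OF e(1)] long by simp
qed

end

lemma graph_Union_path_edges:
  assumes "finite W" and "\<And>i. i \<in> I \<Longrightarrow> distinct (Q i) \<and> set (Q i) \<subseteq> W"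
  shows "graph W (\<Union>i\<in>I. path_edges (Q i))"
proof -
  have "\<exists>u v. u \<noteq> v \<and> u \<in> W \<and> v \<in> W \<and> d = {u, v}" if d: "d \<in> (\<Union>i\<in>I. path_edges (Q i))" for d
  proof -
    obtain i n where i: "i \<in> I" "Suc n < length (Q i)" "d = {Q i ! n, Q i ! Suc n}"
      using d unfolding path_edges_def by blast
    have "Q i ! n \<noteq> Q i ! Suc n" using assms(2)[OF i(1)] i(2) by (simp add: nth_eq_iff_index_eq)
    moreover have "Q i ! n \<in> W" "Q i ! Suc n \<in> W" using assms(2)[OF i(1)] i(2) by auto
    ultimately show ?thesis using i(3) by blast
  qed
  thus ?thesis using assms(1) unfolding graph_def by blast
qed

lemma le_subdivision_of_paths:
  assumes g: "graph V E" and gF: "graph VF EF" and VF: "VF \<subseteq> V"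
    and P: "\<And>e. e \<in> EF \<Longrightarrow> is_path V E (P e) \<and> 2 \<le> length (P e) \<and> length (P e) \<le> k + 2 \<and>
              {hd (P e), last (P e)} = e \<and> internal (P e) \<inter> VF = {}"
    and disj: "\<And>e e'. e \<in> EF \<Longrightarrow> e' \<in> EF \<Longrightarrow> e \<noteq> e' \<Longrightarrow> internal (P e) \<inter> internal (P e') = {}"
  defines "VH \<equiv> VF \<union> (\<Union>e\<in>EF. internal (P e))" and "EH \<equiv> \<Union>e\<in>EF. path_edges (P e)"
  shows "subgraph VH EH V E \<and> is_le_subdivision k VF EF VH EH"
proof -
  have set_P: "set (P e) \<subseteq> VH" if e: "e \<in> EF" for e
  proof -
    have "{hd (P e), last (P e)} \<subseteq> VF" using P[OF e] graph_edge_subset[OF gF e] by simp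
    moreover have "internal (P e) \<subseteq> VH" using e unfolding VH_def by blast
    moreover have "set (P e) = {hd (P e), last (P e)} \<union> internal (P e)"
      using P[OF e] by (simp add: set_eq_ends_Un_internal)
    ultimately show ?thesis unfolding VH_def by blast
  qed
  have path: "is_path VH EH (P e)" if e: "e \<in> EF" for e
  proof -
    have "{P e ! i, P e ! Suc i} \<in> EH" if "Suc i < length (P e)" for i
      unfolding EH_def path_edges_def using e that by blast
    moreover have "P e \<noteq> [] \<and> distinct (P e)" using P[OF e] unfolding is_path_def by blast
    ultimately show ?thesis unfolding is_path_def using set_P[OF e] by blast
  qed
  have "internal (P e) \<subseteq> V" if "e \<in> EF" for e
  proof -
    have "set (P e) \<subseteq> V" using P[OF that] unfolding is_path_def by simp
    thus ?thesis using internal_subset_set[of "P e"] by simp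
  qed
  hence VH_sub: "VH \<subseteq> V" using VF unfolding VH_def by (simp add: UN_least)
  have "path_edges (P e) \<subseteq> E" if "e \<in> EF" for e
    using P[OF that] path_edges_subset by blast
  hence EH_sub: "EH \<subseteq> E" unfolding EH_def by (simp add: UN_least)
  have "finite VH" using VH_sub g unfolding graph_def by (simp add: finite_subset)
  moreover have "distinct (P e) \<and> set (P e) \<subseteq> VH" if "e \<in> EF" for e
    using P[OF that] set_P[OF that] unfolding is_path_def by blast
  ultimately have gH: "graph VH EH" unfolding EH_def by (rule graph_Union_path_edges)
  have "subdivision_paths k VF EF VH EH P"
    by unfold_locales (use gF gH path P disj in \<open>simp_all add: VH_def EH_def\<close>)
  thus ?thesis using gH VH_sub EH_sub is_le_subdivision_iff unfolding subgraph_def by blast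
qed

section \<open>Short subdivisions survive p-reductions\<close>

lemma graph_delete_vertices:
  assumes "graph V E"
  shows "graph (fst (delete_vertices S (V, E))) (snd (delete_vertices S (V, E)))"
proof -
  have "\<exists>u v. u \<noteq> v \<and> u \<in> V - S \<and> v \<in> V - S \<and> e = {u, v}" if e: "e \<in> E" "e \<inter> S = {}" for e
  proof -
    obtain u v where "u \<noteq> v" "u \<in> V" "v \<in> V" "e = {u, v}"
      using assms e(1) unfolding graph_def by blast
    thus ?thesis using e(2) by auto
  qed
  moreover have "finite (V - S)" using assms unfolding graph_def by simp
  ultimately show ?thesis unfolding graph_def delete_vertices_def by simp
qed

lemma subgraph_delete_vertices:
  assumes sub: "subgraph VH EH V E" and disj: "VH \<inter> S = {}"
  shows "subgraph VH EH (fst (delete_vertices S (V, E))) (snd (delete_vertices S (V, E)))"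
proof -
  have gH: "graph VH EH" and "VH \<subseteq> V" "EH \<subseteq> E" using sub unfolding subgraph_def by auto
  moreover have "e \<inter> S = {}" if "e \<in> EH" for e using graph_edge_subset[OF gH that] disj by blast
  ultimately show ?thesis unfolding subgraph_def delete_vertices_def using disj by auto
qed

lemma p_reductionE:
  assumes "p_reduction p (V, E) G'"
  obtains v where "v \<in> V" "degree E v \<le> 1" "G' = delete_vertices {v} (V, E)"
  | xs where "strict_ear V E xs" "p \<le> length xs - 1" "G' = delete_vertices (internal xs) (V, E)"
  using assms unfolding p_reduction_def by auto

lemma p_reduction_deletes_vertices:
  assumes "p_reduction p (V, E) G'" "2 \<le> p"
  obtains S where "S \<noteq> {}" "S \<subseteq> V" "G' = delete_vertices S (V, E)"
  using assms(1)
proof (cases rule: p_reductionE)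
  case (1 v)
  thus thesis using that[of "{v}"] by simp
next
  case (2 xs)
  have "xs ! 1 \<in> internal xs" using 2(2) assms(2) by (intro nth_mem_internal) auto
  moreover have "set xs \<subseteq> V" using 2(1) unfolding strict_ear_def is_path_def by simp
  ultimately show thesis using that[of "internal xs"] 2(3) internal_subset_set[of xs] by blast
qed

lemma p_reduction_graph:
  assumes g: "graph V E" and p: "2 \<le> p" and red: "p_reduction p (V, E) G'"
  shows "graph (fst G') (snd G') \<and> fst G' \<subset> V \<and> snd G' \<subseteq> E"
proof -
  obtain S where "S \<noteq> {}" "S \<subseteq> V" "G' = delete_vertices S (V, E)"
    using p_reduction_deletes_vertices[OF red p] by blast
  thus ?thesis using graph_delete_vertices[OF g, of S] unfolding delete_vertices_def by auto
qed

lemma p_reduction_preserves_contains_le_subdivision: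
  assumes g: "graph V E" and p: "2 \<le> p" and red: "p_reduction p (V, E) G'"
    and H: "contains_le_subdivision_mindeg3 (p - 2) V E"
  shows "contains_le_subdivision_mindeg3 (p - 2) (fst G') (snd G')"
proof -
  obtain VH EH VF EF where sub: "subgraph VH EH V E" and F: "graph VF EF" "VF \<noteq> {}"
      and mindeg: "\<forall>v\<in>VF. degree EF v \<ge> 3" and sd: "is_le_subdivision (p - 2) VF EF VH EH"
    using H unfolding contains_le_subdivision_mindeg3_def by blast
  then obtain P where "subdivision_paths (p - 2) VF EF VH EH P" using is_le_subdivision_iff by blast
  then interpret subdivision_paths "p - 2" VF EF VH EH P .
  obtain S where "VH \<inter> S = {}" "G' = delete_vertices S (V, E)"
    using red
  proof (cases rule: p_reductionE)
    case (1 v)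
    have "v \<notin> VH"
    proof
      assume "v \<in> VH"
      hence "2 \<le> degree E v" by (rule vertex_degree_ge_2[OF g sub mindeg])
      thus False using 1(2) by simp
    qed
    hence "VH \<inter> {v} = {}" by blast
    thus thesis using that 1(3) by blast
  next
    case (2 xs)
    have "p - 2 + 2 < length xs" using 2(2) p by linarith
    hence "VH \<inter> internal xs = {}" by (rule long_ear_avoids_subdivision[OF g sub mindeg 2(1)])
    thus thesis using that 2(3) by blast
  qed
  hence "subgraph VH EH (fst G') (snd G')" using subgraph_delete_vertices[OF sub] by simp
  thus ?thesis using F mindeg sd unfolding contains_le_subdivision_mindeg3_def by blast
qed

lemma contains_le_subdivision_mindeg3_empty: "\<not> contains_le_subdivision_mindeg3 k ({} :: 'a set) {}"
proof
  assume "contains_le_subdivision_mindeg3 k ({} :: 'a set) {}"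
  then obtain VH EH VF EF where "subgraph VH EH ({} :: 'a set) {}" "graph VF EF" "VF \<noteq> {}"
    "\<forall>v\<in>VF. degree EF v \<ge> 3" "is_le_subdivision k VF EF VH EH"
    unfolding contains_le_subdivision_mindeg3_def by (elim exE conjE)
  moreover from this(5) obtain P where "subdivision_paths k VF EF VH EH P"
    using is_le_subdivision_iff by blast
  ultimately show False using subdivision_paths.vertices unfolding subgraph_def by blast
qed

lemma p_path_degenerate_imp_not_contains:
  assumes "graph V E" "2 \<le> p" "p_path_degenerate p V E"
  shows "\<not> contains_le_subdivision_mindeg3 (p - 2) V E"
proof -
  have "graph (fst G) (snd G) \<longrightarrow> \<not> contains_le_subdivision_mindeg3 (p - 2) (fst G) (snd G)"
    if "(p_reduction p)\<^sup>*\<^sup>* G ({}, {})" for G :: "'a set \<times> 'a set set"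
    using that
  proof (induction rule: converse_rtranclp_induct)
    case base
    show ?case using contains_le_subdivision_mindeg3_empty[where 'a = 'a] by simp
  next
    case (step G G')
    obtain V1 E1 where G: "G = (V1, E1)" by fastforce
    obtain V2 E2 where G': "G' = (V2, E2)" by fastforce
    show ?case
    proof (intro impI notI)
      assume g: "graph (fst G) (snd G)"
        and H: "contains_le_subdivision_mindeg3 (p - 2) (fst G) (snd G)"
      have g1: "graph V1 E1" and H1: "contains_le_subdivision_mindeg3 (p - 2) V1 E1"
        and red: "p_reduction p (V1, E1) (V2, E2)" using g H step(1) unfolding G G' by auto
      have "graph V2 E2" using p_reduction_graph[OF g1 assms(2) red] by simp
      moreover have "contains_le_subdivision_mindeg3 (p - 2) V2 E2"
        using p_reduction_preserves_contains_le_subdivision[OF g1 assms(2) red H1] by simp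
      ultimately show False using step(3) unfolding G' by simp
    qed
  qed
  from this[of "(V, E)"] show ?thesis using assms unfolding p_path_degenerate_def by simp
qed

section \<open>The graph of threads\<close>

definition branch_vertices :: "'a set \<Rightarrow> 'a set set \<Rightarrow> 'a set" where
  "branch_vertices V E = {v \<in> V. 3 \<le> degree E v}"

definition thread_edges :: "'a set \<Rightarrow> 'a set set \<Rightarrow> 'a set set" where
  "thread_edges V E = {{hd s, last s} | s. thread V E s}"

definition thread_of :: "'a set \<Rightarrow> 'a set set \<Rightarrow> 'a set \<Rightarrow> 'a list" where
  "thread_of V E e = (SOME s. thread V E s \<and> {hd s, last s} = e)"

lemma thread_of_spec:
  "e \<in> thread_edges V E \<Longrightarrow>
     thread V E (thread_of V E e) \<and> {hd (thread_of V E e), last (thread_of V E e)} = e"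
  unfolding thread_edges_def thread_of_def by (rule someI_ex) blast

lemma thread_ends_branch_vertices:
  "thread V E s \<Longrightarrow> hd s \<in> branch_vertices V E \<and> last s \<in> branch_vertices V E"
  unfolding thread_def branch_vertices_def is_path_def by auto

lemma thread_internal_disjoint_branch_vertices:
  "thread V E s \<Longrightarrow> internal s \<inter> branch_vertices V E = {}"
  unfolding thread_def branch_vertices_def by auto

lemma graph_thread_graph: "graph V E \<Longrightarrow> graph (branch_vertices V E) (thread_edges V E)"
  unfolding graph_def thread_edges_def
  using thread_ends_branch_vertices is_path_hd_neq_last
  by (auto simp: branch_vertices_def thread_def) blast

lemma thread_of_internal_disjoint:
  assumes g: "graph V E" and e: "e \<in> thread_edges V E" "e' \<in> thread_edges V E" "e \<noteq> e'"
  shows "internal (thread_of V E e) \<inter> internal (thread_of V E e') = {}"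
proof (rule ccontr)
  let ?s = "thread_of V E e" and ?s' = "thread_of V E e'"
  assume "internal ?s \<inter> internal ?s' \<noteq> {}"
  then obtain w where "w \<in> internal ?s" "w \<in> internal ?s'" by blast
  hence "?s = ?s' \<or> ?s = rev ?s'"
    using threads_sharing_internal_vertex[OF g] thread_of_spec e by blast
  moreover have "?s' \<noteq> []" using thread_of_spec[OF e(2)] unfolding thread_def by auto
  ultimately have "{hd ?s, last ?s} = {hd ?s', last ?s'}" by (auto simp: hd_rev last_rev)
  thus False using thread_of_spec e by metis
qed

section \<open>Graphs admitting no p-reduction\<close>

locale irreducible_graph =
  fixes V :: "'a set" and E :: "'a set set" and p :: nat
  assumes graph: "graph V E" and p_ge_2: "2 \<le> p"
    and long_cycles: "\<And>xs. is_cycle V E xs \<Longrightarrow> 2 * p - 1 \<le> length xs"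
    and irreducible: "\<And>G'. \<not> p_reduction p (V, E) G'"
begin

lemma degree_ge_2: "v \<in> V \<Longrightarrow> 2 \<le> degree E v"
  using irreducible unfolding p_reduction_def by fastforce

lemma strict_ear_length_le: "strict_ear V E xs \<Longrightarrow> length xs \<le> p"
  using irreducible unfolding p_reduction_def by fastforce

text \<open>A degree-2 path cannot close up on itself: the resulting cycle would be at most p long.\<close>
lemma strict_ear_extend:
  assumes ear: "strict_ear V E xs" and deg: "degree E (last xs) = 2"
  obtains w where "strict_ear V E (xs @ [w])"
proof -
  have xs: "is_path V E xs" "2 \<le> length xs" and deg2: "\<forall>w\<in>internal xs. degree E w = 2"
    using ear unfolding strict_ear_def by auto
  let ?prev = "xs ! (length xs - 2)"
  have "last xs = xs ! Suc (length xs - 2)"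
    using xs(2) by (cases xs rule: rev_cases) (auto simp: nth_append)
  hence "?prev \<in> neighbours E (last xs)"
    using is_path_neighbours[OF xs(1), of "length xs - 2"] xs(2) by simp
  moreover have "neighbours E (last xs) \<noteq> {?prev}"
    using deg degree_eq_card_neighbours[OF graph] by fastforce
  ultimately obtain w where w: "w \<in> neighbours E (last xs)" "w \<noteq> ?prev" by blast
  hence edge: "{last xs, w} \<in> E" by simp
  show thesis
  proof (cases "w \<in> set xs")
    case True
    hence "w = hd xs"
      using deg2_path_closing_neighbour[OF graph xs(1) deg2 xs(2) edge _ w(2)] by simp
    moreover have "xs \<noteq> []" using xs(2) by auto
    ultimately have "length xs \<noteq> 2" using w(2) by (auto simp: hd_conv_nth)
    hence "is_cycle V E xs"
      using xs edge \<open>w = hd xs\<close> unfolding is_cycle_def by (simp add: insert_commute)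
    hence False using long_cycles strict_ear_length_le[OF ear] p_ge_2 by fastforce
    thus thesis ..
  next
    case False
    have "w \<in> V" using graph_edgeD[OF graph edge] by simp
    hence "is_path V E (xs @ [w])"
      using xs edge False unfolding is_path_iff_successively by (auto simp: successively_append_iff)
    moreover have "\<forall>u\<in>internal (xs @ [w]). degree E u = 2"
      using deg2 deg internal_snoc[OF xs(2)] by simp
    ultimately have "strict_ear V E (xs @ [w])"
      unfolding strict_ear_def using xs(2) is_path_hd_neq_last[of V E "xs @ [w]"] by simp
    thus thesis by (rule that)
  qed
qed

lemma strict_ear_to_branch_vertex:
  assumes edge: "{u, x} \<in> E"
  obtains s where "strict_ear V E s" "hd s = u" "s ! 1 = x" "3 \<le> degree E (last s)"
proof -
  define ears where "ears = {xs. strict_ear V E xs \<and> hd xs = u \<and> xs ! 1 = x}"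
  have "[u, x] \<in> ears" using edge graph_edgeD[OF graph edge]
    unfolding ears_def strict_ear_def is_path_def internal_def by auto
  hence start: "\<exists>xs\<in>ears. length xs = 2" by force
  have "finite V" using graph unfolding graph_def by simp
  hence bound: "\<forall>n. (\<exists>xs\<in>ears. length xs = n) \<longrightarrow> n \<le> card V"
    using is_path_length_le_card unfolding ears_def strict_ear_def by blast
  obtain n where "\<exists>xs\<in>ears. length xs = n"
    and longest: "\<forall>m. (\<exists>xs\<in>ears. length xs = m) \<longrightarrow> m \<le> n"
    using Nat.ex_has_greatest_nat[where P = "\<lambda>n. \<exists>xs\<in>ears. length xs = n", OF start bound]
    by blast
  then obtain xs where xs: "xs \<in> ears" "length xs = n" by blast
  have ear: "strict_ear V E xs" and len: "2 \<le> length xs"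
    using xs unfolding ears_def strict_ear_def by auto
  have "degree E (last xs) \<noteq> 2"
  proof
    assume "degree E (last xs) = 2"
    then obtain w where "strict_ear V E (xs @ [w])" using strict_ear_extend[OF ear] by blast
    hence "xs @ [w] \<in> ears" using xs len unfolding ears_def by (cases xs) (auto simp: nth_append)
    hence "Suc n \<le> n" using longest xs(2) by (metis length_append_singleton)
    thus False by simp
  qed
  moreover have "last xs \<in> V" using ear len unfolding strict_ear_def is_path_def by auto
  hence "2 \<le> degree E (last xs)" by (rule degree_ge_2)
  ultimately have "3 \<le> degree E (last xs)" by simp
  thus thesis using that[of xs] xs unfolding ears_def by blast
qed

lemma thread_length_le: "thread V E s \<Longrightarrow> length s \<le> p"
  using strict_ear_length_le is_path_hd_neq_last unfolding thread_def strict_ear_def by blast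

text \<open>Two distinct threads with the same ends close a cycle of length at most 2p - 2.\<close>
lemma threads_same_ends:
  assumes s1: "thread V E s1" and s2: "thread V E s2"
    and hd: "hd s1 = hd s2" and last: "last s1 = last s2"
  shows "s1 ! 1 = s2 ! 1"
proof (rule ccontr)
  assume differ: "s1 ! 1 \<noteq> s2 ! 1"
  have p1: "is_path V E s1" "2 \<le> length s1" and p2: "is_path V E s2" "2 \<le> length s2"
    using s1 s2 unfolding thread_def by auto
  have ends_s2: "hd s1 \<notin> internal s2" "last s1 \<notin> internal s2"
    using thread_end_notin_internal[OF s2 s1] by auto
  have "internal s1 \<inter> internal s2 = {}"
  proof (rule ccontr)
    assume "internal s1 \<inter> internal s2 \<noteq> {}"
    then obtain w where "w \<in> internal s1" "w \<in> internal s2" by blast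
    hence "s1 = s2 \<or> s1 = rev s2" using threads_sharing_internal_vertex[OF graph s1 s2] by blast
    moreover have "s1 \<noteq> rev s2"
      using hd last is_path_hd_neq_last[OF p1] p2 by (auto simp: hd_rev)
    ultimately show False using differ by blast
  qed
  hence disj: "set s1 \<inter> set (tl (rev (tl s2))) = {}"
    using ends_s2 set_eq_ends_Un_internal[OF p1(2)] by (auto simp: tl_rev_tl internal_def)
  define c where "c = s1 @ tl (rev (tl s2))"
  have tl_s2: "tl s2 \<noteq> []" "hd (tl s2) = s2 ! 1" using p2(2) by (cases s2; cases "tl s2"; auto)+
  have "is_path V E (rev (tl s2))" using is_path_rev is_path_tl p2(1) tl_s2 by blast
  moreover have "last s1 = hd (rev (tl s2))"
    using last tl_s2 p2(2) by (simp add: hd_rev last_tl)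
  ultimately have path: "is_path V E c"
    using is_path_append_tl[OF p1(1)] disj unfolding c_def by blast
  have "last c = last (rev (tl s2))"
    using \<open>last s1 = hd (rev (tl s2))\<close> tl_s2(1) unfolding c_def by (cases "rev (tl s2)") auto
  hence "last c = s2 ! 1" using tl_s2 by (simp add: last_rev)
  moreover have "{hd s2, s2 ! 1} \<in> E"
    using is_path_neighbours[OF p2(1), of 0] p2(2) by (cases s2) (auto simp: Suc_le_eq)
  moreover have "hd c = hd s1" using p1(2) unfolding c_def by (cases s1) auto
  ultimately have closing: "{last c, hd c} \<in> E" using hd by (simp add: insert_commute)
  have len_c: "length c = length s1 + length s2 - 2" unfolding c_def using p2(2) by simp
  have "length s1 = 2 \<Longrightarrow> s1 ! 1 = last s1" "length s2 = 2 \<Longrightarrow> s2 ! 1 = last s2"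
    by (cases s1 rule: rev_cases; simp add: nth_append;
        cases s2 rule: rev_cases; simp add: nth_append)+
  hence "3 \<le> length c" using differ last p1(2) p2(2) len_c by fastforce
  hence "is_cycle V E c" using path closing unfolding is_cycle_def by blast
  hence "2 * p - 1 \<le> length c" by (rule long_cycles)
  thus False using len_c thread_length_le[OF s1] thread_length_le[OF s2] p_ge_2 by linarith
qed

lemma thread_degree_ge_3:
  assumes v: "v \<in> branch_vertices V E"
  shows "3 \<le> degree (thread_edges V E) v"
proof -
  have deg_v: "3 \<le> degree E v" using v unfolding branch_vertices_def by simp
  define S where "S x = (SOME s. strict_ear V E s \<and> hd s = v \<and> s ! 1 = x \<and> 3 \<le> degree E (last s))"
    for x
  have S: "thread V E (S x) \<and> hd (S x) = v \<and> S x ! 1 = x" if x: "x \<in> neighbours E v" for x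
  proof -
    obtain s where "strict_ear V E s \<and> hd s = v \<and> s ! 1 = x \<and> 3 \<le> degree E (last s)"
      using strict_ear_to_branch_vertex[of v x] x by auto
    hence "strict_ear V E (S x) \<and> hd (S x) = v \<and> S x ! 1 = x \<and> 3 \<le> degree E (last (S x))"
      unfolding S_def by (rule someI)
    thus ?thesis using deg_v unfolding thread_def strict_ear_def by auto
  qed
  define f where "f x = {v, last (S x)}" for x
  have "f x \<in> {e \<in> thread_edges V E. v \<in> e}" if "x \<in> neighbours E v" for x
    using S[OF that] unfolding f_def thread_edges_def by auto
  moreover have "inj_on f (neighbours E v)"
  proof
    fix x y assume x: "x \<in> neighbours E v" and y: "y \<in> neighbours E v" and eq: "f x = f y"
    have "v \<noteq> last (S x)" "v \<noteq> last (S y)"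
      using S x y is_path_hd_neq_last unfolding thread_def by metis+
    hence "last (S x) = last (S y)" using eq unfolding f_def by (auto simp: doubleton_eq_iff)
    thus "x = y" using threads_same_ends S x y by metis
  qed
  moreover have "finite (thread_edges V E)"
    using graph_finite_edges[OF graph_thread_graph[OF graph]] .
  ultimately have "card (neighbours E v) \<le> card {e \<in> thread_edges V E. v \<in> e}"
    by (intro card_inj_on_le) auto
  thus ?thesis using deg_v degree_eq_card_neighbours[OF graph] unfolding degree_def by simp
qed

lemma branch_vertices_nonempty:
  assumes "V \<noteq> {}" shows "branch_vertices V E \<noteq> {}"
proof -
  obtain u where u: "u \<in> V" using assms by blast
  hence "neighbours E u \<noteq> {}" using degree_ge_2 degree_eq_card_neighbours[OF graph] by fastforce
  then obtain x where "{u, x} \<in> E" by auto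
  then obtain s where s: "strict_ear V E s" "3 \<le> degree E (last s)"
    using strict_ear_to_branch_vertex by metis
  hence "last s \<in> V" unfolding strict_ear_def is_path_def by auto
  thus ?thesis using s(2) unfolding branch_vertices_def by blast
qed

lemma contains_le_subdivision_mindeg3_if_nonempty:
  assumes "V \<noteq> {}" shows "contains_le_subdivision_mindeg3 (p - 2) V E"
proof -
  let ?VF = "branch_vertices V E" and ?EF = "thread_edges V E" and ?P = "thread_of V E"
  have "is_path V E (?P e) \<and> 2 \<le> length (?P e) \<and> length (?P e) \<le> p - 2 + 2 \<and>
      {hd (?P e), last (?P e)} = e \<and> internal (?P e) \<inter> ?VF = {}" if e: "e \<in> ?EF" for e
  proof -
    have "thread V E (?P e)" "{hd (?P e), last (?P e)} = e" using thread_of_spec[OF e] by auto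
    thus ?thesis using thread_length_le thread_internal_disjoint_branch_vertices p_ge_2
      unfolding thread_def by fastforce
  qed
  moreover have "?VF \<subseteq> V" unfolding branch_vertices_def by blast
  ultimately have "\<exists>VH EH. subgraph VH EH V E \<and> is_le_subdivision (p - 2) ?VF ?EF VH EH"
    using le_subdivision_of_paths[OF graph graph_thread_graph[OF graph]]
      thread_of_internal_disjoint[OF graph] by blast
  thus ?thesis
    using graph_thread_graph[OF graph] branch_vertices_nonempty[OF assms] thread_degree_ge_3
    unfolding contains_le_subdivision_mindeg3_def by blast
qed

end

lemma contains_le_subdivision_mindeg3_mono:
  "contains_le_subdivision_mindeg3 k V' E' \<Longrightarrow> V' \<subseteq> V \<Longrightarrow> E' \<subseteq> E \<Longrightarrow>
     contains_le_subdivision_mindeg3 k V E"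
  unfolding contains_le_subdivision_mindeg3_def subgraph_def by blast

lemma not_contains_imp_p_path_degenerate:
  assumes "graph V E" "2 \<le> p" "\<And>xs. is_cycle V E xs \<Longrightarrow> 2 * p - 1 \<le> length xs"
    and "\<not> contains_le_subdivision_mindeg3 (p - 2) V E"
  shows "p_path_degenerate p V E"
  using assms
proof (induction "card V" arbitrary: V E rule: less_induct)
  case less
  show ?case
  proof (cases "\<exists>G'. p_reduction p (V, E) G'")
    case True
    then obtain V' E' where red: "p_reduction p (V, E) (V', E')" by auto
    have G': "graph V' E'" "V' \<subset> V" "E' \<subseteq> E" using p_reduction_graph[OF less.prems(1,2) red] by auto
    have "card V' < card V"
      using G'(2) less.prems(1) unfolding graph_def by (simp add: psubset_card_mono)
    moreover have "is_cycle V' E' xs \<Longrightarrow> 2 * p - 1 \<le> length xs" for xs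
      using less.prems(3) is_cycle_mono G'(2,3) by blast
    moreover have "\<not> contains_le_subdivision_mindeg3 (p - 2) V' E'"
      using less.prems(4) contains_le_subdivision_mindeg3_mono G'(2,3) by blast
    ultimately have "p_path_degenerate p V' E'" using less.hyps G'(1) less.prems(2) by blast
    thus ?thesis
      using red unfolding p_path_degenerate_def by (rule converse_rtranclp_into_rtranclp[rotated])
  next
    case False
    show ?thesis
    proof (cases "V = {}")
      case True
      hence "E = {}" using graph_empty_vertices less.prems(1) by blast
      thus ?thesis using \<open>V = {}\<close> unfolding p_path_degenerate_def by simp
    next
      case False
      interpret irreducible_graph V E p
        using less.prems \<open>\<nexists>G'. p_reduction p (V, E) G'\<close> by unfold_locales auto
      show ?thesis using contains_le_subdivision_mindeg3_if_nonempty[OF False] less.prems(4) by simp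
    qed
  qed
qed

theorem mainTheorem5:
  fixes V :: "'a set" and E :: "'a set set" and p :: nat
  assumes "graph V E" and "p \<ge> 2" and "girth V E \<ge> enat (2 * p - 1)"
  shows "p_path_degenerate p V E \<longleftrightarrow>
    \<not> (\<exists>VH EH VF EF. subgraph VH EH V E \<and> graph VF EF \<and> VF \<noteq> {} \<and>
          (\<forall>v\<in>VF. degree EF v \<ge> 3) \<and> is_le_subdivision (p - 2) VF EF VH EH)"
proof -
  have "is_cycle V E xs \<Longrightarrow> 2 * p - 1 \<le> length xs" for xs
    using girth_le_cycle_length assms(3) by blast
  hence "p_path_degenerate p V E \<longleftrightarrow> \<not> contains_le_subdivision_mindeg3 (p - 2) V E"
    using p_path_degenerate_imp_not_contains not_contains_imp_p_path_degenerate assms(1,2)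
    by blast
  thus ?thesis unfolding contains_le_subdivision_mindeg3_def .
qed

end
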